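(* Assume condition (C) holds, so that $f$ is well defined. Suppose that $\sum_{i=0}^\infty\delta^-(i)<\infty$, that for every fixed $N\in\mathbb Z_+$, $\mathbb P_i\{X_n>N\text{ for all }n\ge0\}\to1$ as $i\to\infty$, and that $\sup_{i\in\mathbb Z_+}\mathbb E_i\ell(i)<\infty$. Then $\liminf_{i\to\infty}f(i)\ge1$ and $\inf_{i\in\mathbb Z_+}f(i)>0$.
   Context: Let $\mathbb Z_+=\{0,1,2,\dots\}$. Let $Q$ be a nonnegative transition kernel on $\mathbb Z_+$: $Q(i,j)\ge 0$ and $0<Q(i,\mathbb Z_+):=\sum_{j\ge0}Q(i,j)<\infty$ for every $i$, and $Q$ is irreducible (for all $i,j$ there is $n\ge1$ with $Q^n(i,j)>0$). Let $P(i,j):=Q(i,j)/Q(i,\mathbb Z_+)$ and let $(X_n)_{n\ge0}$ be a Markov chain on $\mathbb Z_+$ with transition matrix $P$; $\mathbb P_i,\mathbb E_i$ denote probability and expectation given $X_0=i$. Let $\delta(j):=\log Q(j,\mathbb Z_+)$, $\delta^+:=\max(\delta,0)$, $\delta^-:=\max(-\delta,0)$. The local time at $j$ is $\ell(j):=\sum_{n=0}^\infty\mathbf 1\{X_n=j\}$. Condition (C): for every $i$, $\mathbb E_i\prod_{n=0}^\infty \max(Q(X_n,\mathbb Z_+),1)<\infty$. Under (C) define $f(i):=\mathbb E_i\prod_{n=0}^\infty Q(X_n,\mathbb Z_+)\in[0,\infty)$ (equivalently $f(i)=\mathbb E_i\exp(\sum_j\ell(j)\delta(j))$). *)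

theory Defs
  imports "HOL-Probability.Probability"
begin

definition Qtot :: "(nat \<Rightarrow> nat \<Rightarrow> real) \<Rightarrow> nat \<Rightarrow> real" where
  "Qtot Q i = (\<Sum>j. Q i j)"

definition delta :: "(nat \<Rightarrow> nat \<Rightarrow> real) \<Rightarrow> nat \<Rightarrow> real" where
  "delta Q j = ln (Qtot Q j)"

fun Qpow :: "(nat \<Rightarrow> nat \<Rightarrow> real) \<Rightarrow> nat \<Rightarrow> nat \<Rightarrow> nat \<Rightarrow> ennreal" where
  "Qpow Q 0 i j = (if i = j then 1 else 0)"
| "Qpow Q (Suc n) i j = (\<Sum>k. Qpow Q n i k * ennreal (Q k j))"

definition irreducible_kernel :: "(nat \<Rightarrow> nat \<Rightarrow> real) \<Rightarrow> bool" where
  "irreducible_kernel Q \<longleftrightarrow> (\<forall>i j. \<exists>n\<ge>1. Qpow Q n i j > 0)"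

definition Ptrans :: "(nat \<Rightarrow> nat \<Rightarrow> real) \<Rightarrow> nat \<Rightarrow> nat pmf" where
  "Ptrans Q i = embed_pmf (\<lambda>j. Q i j / Qtot Q i)"

text \<open>Underlying probability space: independent samples \<open>\<omega> (n, j)\<close> from P(j, .)
  for every time n and state j (random mapping representation of a Markov chain).\<close>
definition Omega :: "(nat \<Rightarrow> nat \<Rightarrow> real) \<Rightarrow> (nat \<times> nat \<Rightarrow> nat) measure" where
  "Omega Q = (\<Pi>\<^sub>M nj\<in>UNIV. measure_pmf (Ptrans Q (snd nj)))"

text \<open>The Markov chain started at i: X_0 = i, X_{n+1} = \<omega>(n, X_n).
  Under Omega Q it has transition matrix P and X_0 = i, so Omega Q plays the role of P_i.\<close>
fun Xch :: "nat \<Rightarrow> nat \<Rightarrow> (nat \<times> nat \<Rightarrow> nat) \<Rightarrow> nat" where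
  "Xch i 0 \<omega> = i"
| "Xch i (Suc n) \<omega> = \<omega> (n, Xch i n \<omega>)"

definition loctime :: "nat \<Rightarrow> nat \<Rightarrow> (nat \<times> nat \<Rightarrow> nat) \<Rightarrow> ennreal" where
  "loctime i j \<omega> = (\<Sum>n. if Xch i n \<omega> = j then 1 else 0)"

definition prodinf_nn :: "(nat \<Rightarrow> real) \<Rightarrow> ennreal" where
  "prodinf_nn a = liminf (\<lambda>N. \<Prod>n<N. ennreal (a n))"

definition condC :: "(nat \<Rightarrow> nat \<Rightarrow> real) \<Rightarrow> bool" where
  "condC Q \<longleftrightarrow> (\<forall>i. (\<integral>\<^sup>+ \<omega>. prodinf_nn (\<lambda>n. max (Qtot Q (Xch i n \<omega>)) 1) \<partial>Omega Q) < \<infinity>)"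

definition fQ :: "(nat \<Rightarrow> nat \<Rightarrow> real) \<Rightarrow> nat \<Rightarrow> ennreal" where
  "fQ Q i = (\<integral>\<^sup>+ \<omega>. prodinf_nn (\<lambda>n. Qtot Q (Xch i n \<omega>)) \<partial>Omega Q)"

end

theory Submission
  imports Defs
begin

(*
  Write Y = sum_n delta^-(X_n) = sum_j delta^-(j) l(j) for the total "deficit" along a path.
  Since Q(j, Z_+) >= exp(-delta^-(j)), every partial product of Q(X_n, Z_+) is at least
  exp(-Y); combined with the tangent-line bound exp(-y) >= exp(-y0) (1 + y0 - y) this gives,
  after integration,
        f(i) >= exp(-y0) (1 + y0 - E_i Y)      for every real y0.
  The strong Markov property at the first visit to j yields E_i l(j) = P_i{hit j} E_j l(j),
  hence E_i Y <= G sum_j delta^-(j) P_i{hit j} with G = sup_j E_j l(j) < infinity.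
  Bounding P_i{hit j} by 1 gives the uniform bound E_i Y <= G S (S = sum_j delta^-(j)), whence
  inf_i f(i) >= exp(-G S) > 0 (take y0 = G S).  Bounding it for j < N by the probability that
  the chain ever enters [0,N], which tends to 0 by the escape hypothesis, gives (with y0 = 0)
  liminf_i f(i) >= 1 - G sum_{j>=N} delta^-(j) for every N; letting N -> infinity,
  liminf_i f(i) >= 1.

  The strong Markov property is derived from the random-mapping construction of the chain:
  splicing the first k time slices of one sample with a second, independent sample again
  has law Omega Q, and the spliced path follows the first sample up to time k and then runs
  the chain afresh from X_k with the second sample.
*)

definition splice :: "nat \<Rightarrow> (nat \<times> nat \<Rightarrow> nat) \<Rightarrow> (nat \<times> nat \<Rightarrow> nat) \<Rightarrow> (nat \<times> nat \<Rightarrow> nat)" where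
  "splice k \<omega> \<omega>' = (\<lambda>(n, j). if n < k then \<omega> (n, j) else \<omega>' (n - k, j))"

lemma Xch_splice_before: "n \<le> k \<Longrightarrow> Xch i n (splice k \<omega> \<omega>') = Xch i n \<omega>"
proof (induction n)
  case (Suc n)
  then have "Xch i n (splice k \<omega> \<omega>') = Xch i n \<omega>" by simp
  with Suc.prems show ?case by (simp add: splice_def)
qed simp

lemma Xch_splice_after: "Xch i (m + k) (splice k \<omega> \<omega>') = Xch (Xch i k \<omega>) m \<omega>'"
proof (induction m)
  case 0
  then show ?case using Xch_splice_before[of k k] by simp
next
  case (Suc m)
  then show ?case by (simp add: splice_def)
qed

lemma ennreal_suminf_swap:
  fixes f :: "nat \<Rightarrow> nat \<Rightarrow> ennreal"
  shows "(\<Sum>i. \<Sum>j. f i j) = (\<Sum>j. \<Sum>i. f i j)"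
proof -
  interpret C: sigma_finite_measure "count_space (UNIV::nat set)"
    by (rule sigma_finite_measure_count_space)
  interpret PC: pair_sigma_finite "count_space (UNIV::nat set)" "count_space (UNIV::nat set)" ..
  have "(\<integral>\<^sup>+ j. \<integral>\<^sup>+ i. f i j \<partial>count_space UNIV \<partial>count_space UNIV) =
        (\<integral>\<^sup>+ i. \<integral>\<^sup>+ j. f i j \<partial>count_space UNIV \<partial>count_space UNIV)"
    by (rule PC.Fubini') (simp add: pair_measure_countable)
  then show ?thesis by (simp add: nn_integral_count_space_nat)
qed

text \<open>The tangent-line bound for \<open>exp\<close> at \<open>-y\<^sub>0\<close>, evaluated at \<open>-y\<close>.\<close>
lemma exp_tangent_bound: "exp (- y0) * (1 + y0 - y) \<le> exp (- y :: real)"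
proof -
  have "exp (- y0) * (1 + y0 - y) \<le> exp (- y0) * exp (y0 - y)"
    using exp_ge_add_one_self[of "y0 - y"] by (intro mult_left_mono) (simp_all add: algebra_simps)
  also have "\<dots> = exp (- y)" by (simp add: exp_add[symmetric])
  finally show ?thesis .
qed

definition delta_neg :: "(nat \<Rightarrow> nat \<Rightarrow> real) \<Rightarrow> nat \<Rightarrow> real" where
  "delta_neg Q j = max (- delta Q j) 0"

lemma delta_neg_nonneg: "delta_neg Q j \<ge> 0"
  by (simp add: delta_neg_def)

lemma Qtot_ge_exp_delta_neg:
  assumes "Qtot Q j > 0"
  shows "exp (- delta_neg Q j) \<le> Qtot Q j"
proof -
  have "exp (- delta_neg Q j) \<le> exp (ln (Qtot Q j))"
    by (simp add: delta_neg_def delta_def)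
  with assms show ?thesis by simp
qed

text \<open>The probability space of the random-mapping construction, for an arbitrary kernel
  (each \<open>Ptrans Q j\<close> is a probability distribution whatever \<open>Q\<close> is).\<close>
locale chain_space =
  fixes Q :: "nat \<Rightarrow> nat \<Rightarrow> real"
begin

abbreviation column :: "nat \<times> nat \<Rightarrow> nat measure" where
  "column nj \<equiv> measure_pmf (Ptrans Q (snd nj))"

lemma Omega_eq: "Omega Q = PiM UNIV column"
  by (simp add: Omega_def)

lemma space_Omega[simp]: "space (Omega Q) = UNIV"
  by (simp add: Omega_eq space_PiM)

sublocale P: product_prob_space column UNIV
  by unfold_locales (simp add: prob_space_measure_pmf)

sublocale O: prob_space "Omega Q"
  unfolding Omega_eq by (rule prob_space_PiM) (simp add: prob_space_measure_pmf)

lemma measurable_Xch[measurable]: "Xch i n \<in> measurable (Omega Q) (count_space UNIV)"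
proof (induction n)
  case (Suc n)
  have "(\<lambda>\<omega>. \<omega> (n, k)) \<in> measurable (Omega Q) (count_space UNIV)" for k
    unfolding Omega_eq using measurable_component_singleton[of "(n, k)" UNIV column]
    by (simp add: measurable_cong_sets)
  then have "(\<lambda>\<omega>. (\<lambda>k \<omega>. \<omega> (n, k)) (Xch i n \<omega>) \<omega>) \<in> measurable (Omega Q) (count_space UNIV)"
    by (rule measurable_compose_countable[OF _ Suc])
  then show ?case by simp
qed simp

lemma measurable_loctime[measurable]: "loctime i j \<in> borel_measurable (Omega Q)"
  unfolding loctime_def by measurable

lemma measurable_splice:
  "(\<lambda>(\<omega>, \<omega>'). splice k \<omega> \<omega>') \<in> measurable (Omega Q \<Otimes>\<^sub>M Omega Q) (Omega Q)"
  unfolding Omega_eq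
proof (rule measurable_PiM_single)
  show "(\<lambda>(\<omega>, \<omega>'). splice k \<omega> \<omega>') \<in> space (PiM UNIV column \<Otimes>\<^sub>M PiM UNIV column) \<rightarrow> (\<Pi>\<^sub>E i\<in>UNIV. space (column i))"
    by (auto simp: space_pair_measure space_PiM)
  fix nj :: "nat \<times> nat" and A assume A: "A \<in> sets (column nj)"
  obtain n j where nj: "nj = (n, j)" by force
  let ?S = "PiM UNIV column"
  have "{\<omega> \<in> space (?S \<Otimes>\<^sub>M ?S). case_prod (splice k) \<omega> nj \<in> A} =
    (if n < k then {\<omega> \<in> space ?S. \<omega> (n, j) \<in> A} \<times> space ?S
              else space ?S \<times> {\<omega> \<in> space ?S. \<omega> (n - k, j) \<in> A})"
    by (auto simp: space_PiM space_pair_measure splice_def nj)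
  then show "{\<omega> \<in> space (?S \<Otimes>\<^sub>M ?S). case_prod (splice k) \<omega> nj \<in> A} \<in> sets (?S \<Otimes>\<^sub>M ?S)"
    using A by (auto intro!: sets_Collect_single simp: nj)
qed

lemma prod_emb_column: "prod_emb UNIV column J (Pi\<^sub>E J A) = {\<omega>. \<forall>x\<in>J. \<omega> x \<in> A x}"
  by (auto simp: prod_emb_def PiE_iff)

text \<open>It suffices to compare both measures on cylinders;
  a cylinder over \<open>J\<close> pulls back to a product of a cylinder over the times \<open>< k\<close>
  and a shifted cylinder over the times \<open>\<ge> k\<close>.\<close>
lemma distr_splice: "distr (Omega Q \<Otimes>\<^sub>M Omega Q) (Omega Q) (\<lambda>(\<omega>, \<omega>'). splice k \<omega> \<omega>') = Omega Q"
  unfolding Omega_eq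
proof (rule P.PiM_eq)
  let ?S = "PiM UNIV column" and ?f = "\<lambda>(\<omega>, \<omega>'). splice k \<omega> \<omega>'"
  fix J E assume J: "finite J" "\<And>j. j \<in> J \<Longrightarrow> E j \<in> sets (column j)"
  let ?X = "prod_emb UNIV column J (\<Pi>\<^sub>E j\<in>J. E j)"
  define J1 where "J1 = {x\<in>J. fst x < k}"
  define J2 where "J2 = {(m, j). (m + k, j) \<in> J}"
  define E2 where "E2 = (\<lambda>(m, j). E (m + k, j))"
  have fin1: "finite J1" using J by (simp add: J1_def)
  have "J2 = (\<lambda>(m, j). (m + k, j)) -` J" by (auto simp: J2_def)
  then have fin2: "finite J2" using J by (auto intro: finite_vimageI simp: inj_def)
  have J2_eq: "J2 = (\<lambda>(m, j). (m - k, j)) ` (J - J1)"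
  proof (intro set_eqI iffI)
    fix x assume "x \<in> J2"
    then obtain m j where "x = (m, j)" "(m + k, j) \<in> J" by (auto simp: J2_def)
    then show "x \<in> (\<lambda>(m, j). (m - k, j)) ` (J - J1)"
      by (intro image_eqI[of _ _ "(m + k, j)"]) (auto simp: J1_def)
  qed (force simp: J1_def J2_def)
  have pre: "?f -` ?X \<inter> space (?S \<Otimes>\<^sub>M ?S) =
    prod_emb UNIV column J1 (\<Pi>\<^sub>E j\<in>J1. E j) \<times> prod_emb UNIV column J2 (\<Pi>\<^sub>E j\<in>J2. E2 j)"
    unfolding prod_emb_column
    by (auto simp: space_pair_measure space_PiM splice_def J1_def J2_def E2_def split: if_splits)
       (metis le_add_diff_inverse2 not_less)
  have "emeasure (distr (?S \<Otimes>\<^sub>M ?S) ?S ?f) ?X = emeasure (?S \<Otimes>\<^sub>M ?S) (?f -` ?X \<inter> space (?S \<Otimes>\<^sub>M ?S))"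
    using J by (intro emeasure_distr measurable_splice[unfolded Omega_eq] sets_PiM_I) auto
  also have "\<dots> = emeasure ?S (prod_emb UNIV column J1 (\<Pi>\<^sub>E j\<in>J1. E j))
                 * emeasure ?S (prod_emb UNIV column J2 (\<Pi>\<^sub>E j\<in>J2. E2 j))"
    unfolding pre using fin1 fin2 by (intro P.emeasure_pair_measure_Times) (auto intro!: sets_PiM_I)
  also have "\<dots> = (\<Prod>j\<in>J1. emeasure (column j) (E j)) * (\<Prod>j\<in>J2. emeasure (column j) (E2 j))"
    using fin1 fin2 by (simp add: P.emeasure_PiM_emb)
  also have "(\<Prod>j\<in>J2. emeasure (column j) (E2 j)) = (\<Prod>j\<in>J - J1. emeasure (column j) (E j))"
    unfolding J2_eq
    by (subst prod.reindex) (auto simp: inj_on_def J1_def E2_def intro!: prod.cong, metis le_add_diff_inverse2 not_less)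
  also have "(\<Prod>j\<in>J1. emeasure (column j) (E j)) * \<dots> = (\<Prod>j\<in>J. emeasure (column j) (E j))"
    using J by (subst mult.commute) (auto simp: J1_def prod.subset_diff[symmetric])
  finally show "emeasure (distr (?S \<Otimes>\<^sub>M ?S) ?S ?f) ?X = (\<Prod>j\<in>J. emeasure (column j) (E j))" .
qed simp

lemma nn_integral_splice:
  assumes [measurable]: "H \<in> borel_measurable (Omega Q)"
  shows "(\<integral>\<^sup>+\<omega>. H \<omega> \<partial>Omega Q) = (\<integral>\<^sup>+\<omega>. \<integral>\<^sup>+\<omega>'. H (splice k \<omega> \<omega>') \<partial>Omega Q \<partial>Omega Q)"
proof -
  interpret pair_sigma_finite "Omega Q" "Omega Q" ..
  have "(\<integral>\<^sup>+\<omega>. H \<omega> \<partial>Omega Q) = (\<integral>\<^sup>+\<omega>. H \<omega> \<partial>distr (Omega Q \<Otimes>\<^sub>M Omega Q) (Omega Q) (\<lambda>(\<omega>, \<omega>'). splice k \<omega> \<omega>'))"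
    by (simp add: distr_splice)
  also have "\<dots> = (\<integral>\<^sup>+x. H (case x of (\<omega>, \<omega>') \<Rightarrow> splice k \<omega> \<omega>') \<partial>(Omega Q \<Otimes>\<^sub>M Omega Q))"
    by (rule nn_integral_distr[OF measurable_splice]) simp
  also have "\<dots> = (\<integral>\<^sup>+\<omega>. \<integral>\<^sup>+\<omega>'. H (splice k \<omega> \<omega>') \<partial>Omega Q \<partial>Omega Q)"
    using O.nn_integral_fst[OF measurable_compose[OF measurable_splice assms]]
    by (simp add: split_beta')
  finally show ?thesis .
qed

definition first_visit :: "nat \<Rightarrow> nat \<Rightarrow> nat \<Rightarrow> (nat \<times> nat \<Rightarrow> nat) set" where
  "first_visit i j k = {\<omega>. Xch i k \<omega> = j \<and> (\<forall>n<k. Xch i n \<omega> \<noteq> j)}"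

lemma first_visit_sets[measurable]: "first_visit i j k \<in> sets (Omega Q)"
proof -
  have "{\<omega> \<in> space (Omega Q). Xch i k \<omega> = j \<and> (\<forall>n<k. Xch i n \<omega> \<noteq> j)} \<in> sets (Omega Q)"
    by measurable
  then show ?thesis by (simp add: first_visit_def)
qed

lemma first_visit_disjoint: "disjoint_family (first_visit i j)"
  unfolding disjoint_family_on_def first_visit_def
  by (auto simp: set_eq_iff) (metis linorder_neqE_nat)

lemma first_visit_Least:
  assumes "\<exists>n. Xch i n \<omega> = j"
  shows "\<omega> \<in> first_visit i j (LEAST n. Xch i n \<omega> = j)"
  using assms unfolding first_visit_def by (auto intro: LeastI_ex dest: not_less_Least)

lemma UN_first_visit: "(\<Union>k. first_visit i j k) = {\<omega>. \<exists>n. Xch i n \<omega> = j}"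
  using first_visit_Least by (auto simp: first_visit_def) blast

lemma loctime_first_visit_decomp:
  "loctime i j \<omega> = (\<Sum>k. indicator (first_visit i j k) \<omega> * loctime i j \<omega>)"
proof (cases "\<exists>n. Xch i n \<omega> = j")
  case True
  define k where "k = (LEAST n. Xch i n \<omega> = j)"
  have k: "\<omega> \<in> first_visit i j k"
    unfolding k_def using True by (rule first_visit_Least)
  then have "\<omega> \<notin> first_visit i j k'" if "k' \<noteq> k" for k'
    using first_visit_disjoint[of i j] that by (auto simp: disjoint_family_on_def)
  then have "(\<Sum>k'. indicator (first_visit i j k') \<omega> * loctime i j \<omega>)
      = (\<Sum>k'\<in>{k}. indicator (first_visit i j k') \<omega> * loctime i j \<omega>)"
    by (intro suminf_finite) auto
  with k show ?thesis by simp
next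
  case False
  then show ?thesis by (simp add: loctime_def)
qed

lemma first_visit_splice: "k' \<le> k \<Longrightarrow> splice k \<omega> \<omega>' \<in> first_visit i j k' \<longleftrightarrow> \<omega> \<in> first_visit i j k'"
  by (auto simp: first_visit_def Xch_splice_before)

lemma loctime_splice:
  assumes "\<omega> \<in> first_visit i j k"
  shows "loctime i j (splice k \<omega> \<omega>') = loctime j j \<omega>'"
proof -
  let ?v = "\<lambda>n. if Xch i n (splice k \<omega> \<omega>') = j then 1 else (0::ennreal)"
  have "loctime i j (splice k \<omega> \<omega>') = (\<Sum>m. ?v (m + k)) + (\<Sum>n<k. ?v n)"
    unfolding loctime_def by (rule suminf_offset) (rule summableI)
  also have "(\<Sum>n<k. ?v n) = 0"
    using assms by (auto simp: first_visit_def Xch_splice_before intro!: sum.neutral)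
  also have "(\<Sum>m. ?v (m + k)) = loctime j j \<omega>'"
    using assms by (simp add: first_visit_def Xch_splice_after loctime_def)
  finally show ?thesis by simp
qed

abbreviation hit_prob :: "nat \<Rightarrow> nat \<Rightarrow> ennreal" where
  "hit_prob i j \<equiv> emeasure (Omega Q) {\<omega>. \<exists>n. Xch i n \<omega> = j}"

lemma expected_loctime:
  "(\<integral>\<^sup>+\<omega>. loctime i j \<omega> \<partial>Omega Q) = hit_prob i j * (\<integral>\<^sup>+\<omega>. loctime j j \<omega> \<partial>Omega Q)"
proof -
  let ?c = "\<integral>\<^sup>+\<omega>. loctime j j \<omega> \<partial>Omega Q"
  have at_k: "(\<integral>\<^sup>+\<omega>. indicator (first_visit i j k) \<omega> * loctime i j \<omega> \<partial>Omega Q)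
      = emeasure (Omega Q) (first_visit i j k) * ?c" for k
  proof -
    have "(\<integral>\<^sup>+\<omega>. indicator (first_visit i j k) \<omega> * loctime i j \<omega> \<partial>Omega Q)
        = (\<integral>\<^sup>+\<omega>. \<integral>\<^sup>+\<omega>'. indicator (first_visit i j k) (splice k \<omega> \<omega>') * loctime i j (splice k \<omega> \<omega>')
              \<partial>Omega Q \<partial>Omega Q)"
      by (rule nn_integral_splice) measurable
    also have "\<dots> = (\<integral>\<^sup>+\<omega>. \<integral>\<^sup>+\<omega>'. indicator (first_visit i j k) \<omega> * loctime j j \<omega>' \<partial>Omega Q \<partial>Omega Q)"
      by (intro nn_integral_cong) (auto simp: indicator_def first_visit_splice loctime_splice)
    also have "\<dots> = (\<integral>\<^sup>+\<omega>. indicator (first_visit i j k) \<omega> * ?c \<partial>Omega Q)"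
      by (intro nn_integral_cong nn_integral_cmult) measurable
    also have "\<dots> = emeasure (Omega Q) (first_visit i j k) * ?c"
      by (subst nn_integral_multc) auto
    finally show ?thesis .
  qed
  have "(\<integral>\<^sup>+\<omega>. loctime i j \<omega> \<partial>Omega Q)
      = (\<integral>\<^sup>+\<omega>. (\<Sum>k. indicator (first_visit i j k) \<omega> * loctime i j \<omega>) \<partial>Omega Q)"
    by (subst loctime_first_visit_decomp) simp
  also have "\<dots> = (\<Sum>k. \<integral>\<^sup>+\<omega>. indicator (first_visit i j k) \<omega> * loctime i j \<omega> \<partial>Omega Q)"
    by (rule nn_integral_suminf) measurable
  also have "\<dots> = (\<Sum>k. emeasure (Omega Q) (first_visit i j k)) * ?c"
    by (simp add: at_k)
  also have "(\<Sum>k. emeasure (Omega Q) (first_visit i j k)) = hit_prob i j"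
    using first_visit_disjoint by (subst suminf_emeasure) (auto simp: UN_first_visit)
  finally show ?thesis .
qed

definition deficit :: "nat \<Rightarrow> (nat \<times> nat \<Rightarrow> nat) \<Rightarrow> ennreal" where
  "deficit i \<omega> = (\<Sum>n. ennreal (delta_neg Q (Xch i n \<omega>)))"

lemma measurable_deficit[measurable]: "deficit i \<in> borel_measurable (Omega Q)"
  unfolding deficit_def by measurable

lemma deficit_eq_loctime: "deficit i \<omega> = (\<Sum>j. ennreal (delta_neg Q j) * loctime i j \<omega>)"
proof -
  let ?d = "\<lambda>j. ennreal (delta_neg Q j)"
  have visit: "(\<Sum>j. ?d j * (if Xch i n \<omega> = j then 1 else 0)) = ?d (Xch i n \<omega>)" for n
    by (subst suminf_finite[of "{Xch i n \<omega>}"]) auto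
  have "(\<Sum>j. ?d j * loctime i j \<omega>) = (\<Sum>j. \<Sum>n. ?d j * (if Xch i n \<omega> = j then 1 else 0))"
    by (simp add: loctime_def)
  also have "\<dots> = (\<Sum>n. \<Sum>j. ?d j * (if Xch i n \<omega> = j then 1 else 0))"
    by (rule ennreal_suminf_swap)
  finally show ?thesis by (simp add: visit deficit_def)
qed

lemma expected_deficit:
  "(\<integral>\<^sup>+\<omega>. deficit i \<omega> \<partial>Omega Q) = (\<Sum>j. ennreal (delta_neg Q j) * (\<integral>\<^sup>+\<omega>. loctime i j \<omega> \<partial>Omega Q))"
  unfolding deficit_eq_loctime
  by (subst nn_integral_suminf) (auto intro!: suminf_cong nn_integral_cmult)

context
  assumes row_pos: "\<And>j. Qtot Q j > 0"
begin

lemma prodinf_ge_exp_deficit: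
  assumes Y: "deficit i \<omega> = ennreal y" and y: "0 \<le> y"
  shows "ennreal (exp (- y)) \<le> prodinf_nn (\<lambda>n. Qtot Q (Xch i n \<omega>))"
  unfolding prodinf_nn_def
proof (rule Liminf_bounded, intro always_eventually allI)
  fix N
  let ?d = "\<lambda>n. delta_neg Q (Xch i n \<omega>)"
  have "ennreal (\<Sum>n<N. ?d n) = (\<Sum>n<N. ennreal (?d n))"
    by (simp add: delta_neg_nonneg sum_ennreal)
  also have "\<dots> \<le> deficit i \<omega>"
    unfolding deficit_def by (rule sum_le_suminf) (auto intro: summableI)
  finally have "(\<Sum>n<N. ?d n) \<le> y"
    using Y y by simp
  then have "exp (- y) \<le> exp (- (\<Sum>n<N. ?d n))" by simp
  also have "\<dots> = (\<Prod>n<N. exp (- ?d n))"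
    by (simp add: exp_sum[symmetric] sum_negf)
  also have "\<dots> \<le> (\<Prod>n<N. Qtot Q (Xch i n \<omega>))"
    by (intro prod_mono) (simp add: Qtot_ge_exp_delta_neg row_pos)
  finally show "ennreal (exp (- y)) \<le> (\<Prod>n<N. ennreal (Qtot Q (Xch i n \<omega>)))"
    by (subst prod_ennreal) (auto intro: ennreal_leI less_imp_le[OF row_pos])
qed

lemma prodinf_ge_tangent:
  "ennreal (exp (- y0)) * (ennreal (1 + y0) - deficit i \<omega>) \<le> prodinf_nn (\<lambda>n. Qtot Q (Xch i n \<omega>))"
proof (cases "deficit i \<omega>")
  case (real y)
  have "ennreal (exp (- y0)) * (ennreal (1 + y0) - deficit i \<omega>) = ennreal (exp (- y0) * (1 + y0 - y))"
    using real by (simp add: ennreal_minus ennreal_mult')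
  also have "\<dots> \<le> ennreal (exp (- y))"
    by (intro ennreal_leI exp_tangent_bound)
  also have "\<dots> \<le> prodinf_nn (\<lambda>n. Qtot Q (Xch i n \<omega>))"
    using real by (intro prodinf_ge_exp_deficit) simp
  finally show ?thesis .
qed simp

lemma fQ_ge_tangent:
  "ennreal (exp (- y0)) * (ennreal (1 + y0) - (\<integral>\<^sup>+\<omega>. deficit i \<omega> \<partial>Omega Q)) \<le> fQ Q i"
proof -
  let ?a = "ennreal (1 + y0)"
  have "?a = (\<integral>\<^sup>+\<omega>. ?a \<partial>Omega Q)" using O.emeasure_space_1 by simp
  also have "\<dots> \<le> (\<integral>\<^sup>+\<omega>. (?a - deficit i \<omega>) + deficit i \<omega> \<partial>Omega Q)"
    by (intro nn_integral_mono) (auto simp: diff_add_self_ennreal)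
  also have "\<dots> = (\<integral>\<^sup>+\<omega>. ?a - deficit i \<omega> \<partial>Omega Q) + (\<integral>\<^sup>+\<omega>. deficit i \<omega> \<partial>Omega Q)"
    by (rule nn_integral_add) measurable
  finally have "?a - (\<integral>\<^sup>+\<omega>. deficit i \<omega> \<partial>Omega Q) \<le> (\<integral>\<^sup>+\<omega>. ?a - deficit i \<omega> \<partial>Omega Q)"
    by (simp add: ennreal_minus_le_iff add.commute)
  then have "ennreal (exp (- y0)) * (?a - (\<integral>\<^sup>+\<omega>. deficit i \<omega> \<partial>Omega Q))
      \<le> (\<integral>\<^sup>+\<omega>. ennreal (exp (- y0)) * (?a - deficit i \<omega>) \<partial>Omega Q)"
    by (subst nn_integral_cmult) (auto intro: mult_left_mono)
  also have "\<dots> \<le> fQ Q i"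
    unfolding fQ_def by (intro nn_integral_mono prodinf_ge_tangent)
  finally show ?thesis .
qed

end

definition visits_below :: "nat \<Rightarrow> nat \<Rightarrow> (nat \<times> nat \<Rightarrow> nat) set" where
  "visits_below i N = {\<omega>. \<exists>n. Xch i n \<omega> \<le> N}"

lemma visits_below_sets[measurable]: "visits_below i N \<in> sets (Omega Q)"
proof -
  have "{\<omega> \<in> space (Omega Q). \<exists>n. Xch i n \<omega> \<le> N} \<in> sets (Omega Q)" by measurable
  then show ?thesis by (simp add: visits_below_def)
qed

lemma hit_prob_le_visits_below:
  assumes "j \<le> N"
  shows "hit_prob i j \<le> emeasure (Omega Q) (visits_below i N)"
  by (intro emeasure_mono visits_below_sets) (use assms in \<open>auto simp: visits_below_def\<close>)

lemma visits_below_tendsto_0: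
  assumes "(\<lambda>i. measure (Omega Q) {\<omega> \<in> space (Omega Q). \<forall>n. Xch i n \<omega> > N}) \<longlonglongrightarrow> 1"
  shows "(\<lambda>i. measure (Omega Q) (visits_below i N)) \<longlonglongrightarrow> 0"
proof -
  have "measure (Omega Q) (visits_below i N)
      = 1 - measure (Omega Q) {\<omega> \<in> space (Omega Q). \<forall>n. Xch i n \<omega> > N}" for i
  proof -
    have "{\<omega> \<in> space (Omega Q). \<forall>n. Xch i n \<omega> > N} \<in> sets (Omega Q)" by measurable
    moreover have "visits_below i N = space (Omega Q) - {\<omega> \<in> space (Omega Q). \<forall>n. Xch i n \<omega> > N}"
      by (auto simp: visits_below_def simp flip: not_le)
    ultimately show ?thesis by (simp only: O.prob_compl)
  qed
  with tendsto_diff[OF tendsto_const assms, of 1] show ?thesis by simp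
qed

lemma weighted_hit_prob_le: "ennreal (delta_neg Q j) * hit_prob i j \<le> ennreal (delta_neg Q j)"
  using mult_left_mono[OF O.emeasure_le_1, of "ennreal (delta_neg Q j)"] by simp

context
  assumes summable_delta_neg: "summable (delta_neg Q)"
    and green: "(SUP i. \<integral>\<^sup>+ \<omega>. loctime i i \<omega> \<partial>Omega Q) < \<infinity>"
begin

definition G :: real where "G = enn2real (SUP i. \<integral>\<^sup>+ \<omega>. loctime i i \<omega> \<partial>Omega Q)"
definition S :: real where "S = (\<Sum>j. delta_neg Q j)"
definition tail :: "nat \<Rightarrow> real" where "tail N = (\<Sum>j. delta_neg Q (j + N))"

lemma G_nonneg: "G \<ge> 0" by (simp add: G_def)
lemma S_nonneg: "S \<ge> 0"
  unfolding S_def by (rule suminf_nonneg[OF summable_delta_neg delta_neg_nonneg])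
lemma tail_nonneg: "tail N \<ge> 0"
  unfolding tail_def
  by (rule suminf_nonneg) (auto simp: delta_neg_nonneg summable_delta_neg summable_iff_shift)

lemma tail_tendsto_0: "tail \<longlonglongrightarrow> 0"
proof -
  have "tail = (\<lambda>N. S - (\<Sum>j<N. delta_neg Q j))"
    unfolding tail_def S_def by (intro ext suminf_minus_initial_segment summable_delta_neg)
  moreover have "(\<lambda>N. S - (\<Sum>j<N. delta_neg Q j)) \<longlonglongrightarrow> S - S"
    unfolding S_def by (intro tendsto_intros summable_LIMSEQ summable_delta_neg)
  ultimately show ?thesis by simp
qed

lemma expected_loctime_le: "(\<integral>\<^sup>+\<omega>. loctime i j \<omega> \<partial>Omega Q) \<le> hit_prob i j * ennreal G"
proof -
  have "(SUP i. \<integral>\<^sup>+ \<omega>. loctime i i \<omega> \<partial>Omega Q) = ennreal G"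
    unfolding G_def using green by (simp add: ennreal_enn2real)
  then have "(\<integral>\<^sup>+\<omega>. loctime j j \<omega> \<partial>Omega Q) \<le> ennreal G"
    by (metis SUP_upper UNIV_I)
  then show ?thesis
    by (subst expected_loctime) (rule mult_left_mono, simp_all)
qed

lemma expected_deficit_le_hits:
  "(\<integral>\<^sup>+\<omega>. deficit i \<omega> \<partial>Omega Q) \<le> (\<Sum>j. ennreal (delta_neg Q j) * hit_prob i j) * ennreal G"
  unfolding expected_deficit ennreal_suminf_multc[symmetric] mult.assoc
  by (intro suminf_le mult_left_mono expected_loctime_le) (auto intro: summableI)

lemma expected_deficit_uniform: "(\<integral>\<^sup>+\<omega>. deficit i \<omega> \<partial>Omega Q) \<le> ennreal (G * S)"
proof -
  have "(\<Sum>j. ennreal (delta_neg Q j) * hit_prob i j) \<le> (\<Sum>j. ennreal (delta_neg Q j))"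
    by (intro suminf_le weighted_hit_prob_le) (auto intro: summableI)
  also have "\<dots> = ennreal S"
    unfolding S_def by (rule suminf_ennreal2[OF delta_neg_nonneg summable_delta_neg])
  finally have "(\<Sum>j. ennreal (delta_neg Q j) * hit_prob i j) \<le> ennreal S" .
  then have "(\<integral>\<^sup>+\<omega>. deficit i \<omega> \<partial>Omega Q) \<le> ennreal S * ennreal G"
    by (rule order_trans[OF expected_deficit_le_hits mult_right_mono]) simp
  then show ?thesis
    using ennreal_mult[OF G_nonneg S_nonneg] by (simp add: mult.commute)
qed

text \<open>Bound for chains started far out: the first \<open>N\<close> states contribute only through
  \<open>P\<^sub>i(visits_below i N)\<close>, the others through the tail of \<open>\<Sum> \<delta>\<^sup>-\<close>.\<close>
lemma expected_deficit_escape: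
  "(\<integral>\<^sup>+\<omega>. deficit i \<omega> \<partial>Omega Q) \<le> ennreal (G * (tail N + S * measure (Omega Q) (visits_below i N)))"
proof -
  let ?h = "\<lambda>j. ennreal (delta_neg Q j) * hit_prob i j" and ?p = "measure (Omega Q) (visits_below i N)"
  have "(\<Sum>j. ?h j) = (\<Sum>j. ?h (j + N)) + (\<Sum>j<N. ?h j)"
    by (rule suminf_offset) (rule summableI)
  also have "(\<Sum>j. ?h (j + N)) \<le> (\<Sum>j. ennreal (delta_neg Q (j + N)))"
    by (intro suminf_le weighted_hit_prob_le) (auto intro: summableI)
  also have "\<dots> = ennreal (tail N)"
    unfolding tail_def
    by (rule suminf_ennreal2) (auto simp: delta_neg_nonneg summable_delta_neg summable_iff_shift)
  also have "(\<Sum>j<N. ?h j) \<le> (\<Sum>j<N. ennreal (delta_neg Q j) * ennreal ?p)"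
    using hit_prob_le_visits_below
    by (intro sum_mono mult_left_mono) (auto simp: O.emeasure_eq_measure)
  also have "\<dots> = ennreal ((\<Sum>j<N. delta_neg Q j) * ?p)"
    by (simp add: sum_distrib_right[symmetric] sum_ennreal delta_neg_nonneg ennreal_mult'')
  also have "\<dots> \<le> ennreal (S * ?p)"
    unfolding S_def
    by (intro ennreal_leI mult_right_mono sum_le_suminf summable_delta_neg) (auto simp: delta_neg_nonneg)
  finally have "(\<Sum>j. ?h j) \<le> ennreal (tail N + S * ?p)"
    by (simp add: ennreal_plus tail_nonneg S_nonneg add_mono)
  then have "(\<integral>\<^sup>+\<omega>. deficit i \<omega> \<partial>Omega Q) \<le> ennreal (tail N + S * ?p) * ennreal G"
    by (rule order_trans[OF expected_deficit_le_hits mult_right_mono]) simp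
  moreover have "0 \<le> tail N + S * ?p"
    using tail_nonneg S_nonneg by simp
  ultimately show ?thesis by (simp add: mult.commute[of G] ennreal_mult')
qed

text \<open>\<open>inf\<^sub>i f(i) \<ge> exp (-G S) > 0\<close>: take \<open>y\<^sub>0 = G S\<close> in the tangent estimate.\<close>
lemma INF_fQ_pos:
  assumes row_pos: "\<And>j. Qtot Q j > 0"
  shows "(INF i. fQ Q i) > 0"
proof -
  define K where "K = G * S"
  have K: "0 \<le> K" unfolding K_def using G_nonneg S_nonneg by simp
  have "ennreal (exp (- K)) \<le> fQ Q i" for i
  proof -
    have "ennreal (exp (- K)) = ennreal (exp (- K)) * (ennreal (1 + K) - ennreal K)"
      using K by (simp add: ennreal_minus)
    also have "\<dots> \<le> ennreal (exp (- K)) * (ennreal (1 + K) - (\<integral>\<^sup>+\<omega>. deficit i \<omega> \<partial>Omega Q))"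
      unfolding K_def by (intro mult_left_mono ennreal_minus_mono expected_deficit_uniform) simp_all
    also have "\<dots> \<le> fQ Q i"
      by (rule fQ_ge_tangent[OF row_pos])
    finally show ?thesis .
  qed
  then have "ennreal (exp (- K)) \<le> (INF i. fQ Q i)"
    by (rule INF_greatest)
  then show ?thesis
    by (rule less_le_trans[rotated]) simp
qed

text \<open>Taking \<open>y\<^sub>0 = 0\<close>: \<open>f(i) \<ge> 1 - G (tail N + S P\<^sub>i(visits_below i N))\<close>.\<close>
lemma fQ_ge_escape:
  assumes row_pos: "\<And>j. Qtot Q j > 0"
  shows "ennreal (1 - G * (tail N + S * measure (Omega Q) (visits_below i N))) \<le> fQ Q i"
proof -
  have "ennreal (1 - G * (tail N + S * measure (Omega Q) (visits_below i N)))
      = 1 - ennreal (G * (tail N + S * measure (Omega Q) (visits_below i N)))"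
    using ennreal_minus[of "G * (tail N + S * measure (Omega Q) (visits_below i N))" 1]
      G_nonneg tail_nonneg S_nonneg by simp
  also have "\<dots> \<le> 1 - (\<integral>\<^sup>+\<omega>. deficit i \<omega> \<partial>Omega Q)"
    by (intro ennreal_minus_mono expected_deficit_escape) simp
  also have "\<dots> \<le> fQ Q i"
    using fQ_ge_tangent[OF row_pos, of 0] by simp
  finally show ?thesis .
qed

text \<open>\<open>liminf\<^sub>i f(i) \<ge> 1 - G tail(N)\<close> for every \<open>N\<close>, and \<open>tail(N) \<rightarrow> 0\<close>.\<close>
lemma liminf_fQ_ge_1:
  assumes row_pos: "\<And>j. Qtot Q j > 0"
    and escape: "\<And>N. (\<lambda>i. measure (Omega Q) {\<omega> \<in> space (Omega Q). \<forall>n. Xch i n \<omega> > N}) \<longlonglongrightarrow> 1"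
  shows "liminf (\<lambda>i. fQ Q i) \<ge> 1"
proof -
  have at_N: "ennreal (1 - G * tail N) \<le> liminf (\<lambda>i. fQ Q i)" for N
  proof -
    let ?b = "\<lambda>i. ennreal (1 - G * (tail N + S * measure (Omega Q) (visits_below i N)))"
    have "?b \<longlonglongrightarrow> ennreal (1 - G * (tail N + S * 0))"
      by (intro tendsto_ennrealI tendsto_intros visits_below_tendsto_0 escape)
    then have "ennreal (1 - G * tail N) = liminf ?b"
      by (simp add: lim_imp_Liminf)
    also have "\<dots> \<le> liminf (\<lambda>i. fQ Q i)"
      by (intro Liminf_mono always_eventually allI fQ_ge_escape row_pos)
    finally show ?thesis .
  qed
  have "(\<lambda>N. ennreal (1 - G * tail N)) \<longlonglongrightarrow> ennreal (1 - G * 0)"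
    by (intro tendsto_ennrealI tendsto_intros tail_tendsto_0)
  then have "ennreal (1 - G * 0) \<le> liminf (\<lambda>i. fQ Q i)"
    by (rule LIMSEQ_le_const2) (use at_N in blast)
  then show ?thesis by simp
qed

end

end

theorem proposition2:
  fixes Q :: "nat \<Rightarrow> nat \<Rightarrow> real"
  assumes nonneg: "\<And>i j. Q i j \<ge> 0"
    and row_summable: "\<And>i. summable (Q i)"
    and row_pos: "\<And>i. Qtot Q i > 0"
    and irred: "irreducible_kernel Q"
    and C: "condC Q"
    and delta_minus: "summable (\<lambda>i. max (- delta Q i) 0)"
    and escape: "\<And>N::nat. (\<lambda>i. measure (Omega Q) {\<omega> \<in> space (Omega Q). \<forall>n. Xch i n \<omega> > N})
                    \<longlonglongrightarrow> 1"
    and green: "(SUP i. \<integral>\<^sup>+ \<omega>. loctime i i \<omega> \<partial>Omega Q) < \<infinity>"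
  shows "liminf (\<lambda>i. fQ Q i) \<ge> 1 \<and> (INF i. fQ Q i) > 0"
proof -
  have "summable (delta_neg Q)"
    using delta_minus by (simp add: delta_neg_def[abs_def])
  then show ?thesis
    using chain_space.liminf_fQ_ge_1[OF _ green row_pos escape]
      chain_space.INF_fQ_pos[OF _ green row_pos] by blast
qed

end
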